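(* Let $\mathcal{C}$ be a d-category. For every $\mathcal{C}$-language $L$ there exists a $\mathcal{C}$-automaton $X$ with $\mathrm{Lang}(X)=L$. (Conversely, $\mathrm{Lang}(X)$ is a $\mathcal{C}$-language for every $\mathcal{C}$-automaton $X$.)
   Context: A d-category is a small category $\mathcal{C}$ with wide subcategories $\mathcal{C}^+$ (formorphisms) and $\mathcal{C}^-$ (backmorphisms) such that an invertible $\varphi$ is in $\mathcal{C}^+$ iff $\varphi^{-1}\in\mathcal{C}^-$. A $\mathcal{C}$-automaton is a presheaf $X:\mathcal{C}^{op}\to\mathbf{Set}$ with sets of start and accept elements (elements are pairs $(U,x)$, $x\in X[U]$); morphisms of automata are presheaf maps preserving start and accept elements. A linear category is a bipointed d-category isomorphic to a finite (possibly empty) concatenation (gluing $\top$ to $\bot$) of $\mathbf S$ (formorphism $\bot\to\top$), $\mathbf T$ (backmorphism $\top\to\bot$), $\mathbf I$ (inverse pair); a path is a d-functor $\omega:\mathcal I\to\mathcal{C}$ from one; its track object is $\operatorname{colim}_i\mathcal{C}(-,\omega(i))$ with single start element the image of $\mathrm{id}_{\omega(\bot)}$ and single accept element the image of $\mathrm{id}_{\omega(\top)}$; a track object is an automaton isomorphic to such. For track objects, $\Delta\sqsubseteq\Gamma$ if there is a morphism of automata $\Delta\to\Gamma$. A $\mathcal{C}$-language is a class $L$ of track objects that is down-closed: $\Gamma\in L$ and $\Delta\sqsubseteq\Gamma$ imply $\Delta\in L$. $\mathrm{Lang}(X)$ is the class of track objects $\Gamma$ admitting a morphism of automata $\Gamma\to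 X$. *)

theory Defs
  imports Main
begin

text \<open>A small category with objects of type 'o and morphisms of type 'm.
  cmp g f is the composite g o f (first f, then g).\<close>

record ('o, 'm) dcat =
  obj :: "'o set"
  mor :: "'m set"
  src :: "'m \<Rightarrow> 'o"
  tgt :: "'m \<Rightarrow> 'o"
  cmp :: "'m \<Rightarrow> 'm \<Rightarrow> 'm"
  ide :: "'o \<Rightarrow> 'm"
  fwd :: "'m set"
  bwd :: "'m set"

definition hom :: "('o, 'm) dcat \<Rightarrow> 'o \<Rightarrow> 'o \<Rightarrow> 'm set" where
  "hom C a b = {f \<in> mor C. src C f = a \<and> tgt C f = b}"

definition category :: "('o, 'm) dcat \<Rightarrow> bool" where
  "category C \<longleftrightarrow>
     (\<forall>f \<in> mor C. src C f \<in> obj C \<and> tgt C f \<in> obj C) \<and>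
     (\<forall>a \<in> obj C. ide C a \<in> hom C a a) \<and>
     (\<forall>f \<in> mor C. \<forall>g \<in> mor C. tgt C f = src C g \<longrightarrow>
          cmp C g f \<in> hom C (src C f) (tgt C g)) \<and>
     (\<forall>f \<in> mor C. cmp C f (ide C (src C f)) = f \<and> cmp C (ide C (tgt C f)) f = f) \<and>
     (\<forall>f \<in> mor C. \<forall>g \<in> mor C. \<forall>h \<in> mor C.
          tgt C f = src C g \<longrightarrow> tgt C g = src C h \<longrightarrow>
          cmp C h (cmp C g f) = cmp C (cmp C h g) f)"

definition wide_subcat :: "('o, 'm) dcat \<Rightarrow> 'm set \<Rightarrow> bool" where
  "wide_subcat C S \<longleftrightarrow> S \<subseteq> mor C \<and> (\<forall>a \<in> obj C. ide C a \<in> S) \<and>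
     (\<forall>f \<in> S. \<forall>g \<in> S. tgt C f = src C g \<longrightarrow> cmp C g f \<in> S)"

definition inverse_of :: "('o, 'm) dcat \<Rightarrow> 'm \<Rightarrow> 'm \<Rightarrow> bool" where
  "inverse_of C g f \<longleftrightarrow> f \<in> mor C \<and> g \<in> mor C \<and> src C g = tgt C f \<and> tgt C g = src C f \<and>
     cmp C g f = ide C (src C f) \<and> cmp C f g = ide C (tgt C f)"

definition dcategory :: "('o, 'm) dcat \<Rightarrow> bool" where
  "dcategory C \<longleftrightarrow> category C \<and> wide_subcat C (fwd C) \<and> wide_subcat C (bwd C) \<and>
     (\<forall>f g. inverse_of C g f \<longrightarrow> (f \<in> fwd C \<longleftrightarrow> g \<in> bwd C))"

definition dfunctor :: "('o1, 'm1) dcat \<Rightarrow> ('o2, 'm2) dcat \<Rightarrow> ('o1 \<Rightarrow> 'o2) \<Rightarrow> ('m1 \<Rightarrow> 'm2) \<Rightarrow> bool" where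
  "dfunctor A B Fo Fm \<longleftrightarrow>
     (\<forall>a \<in> obj A. Fo a \<in> obj B) \<and>
     (\<forall>f \<in> mor A. Fm f \<in> hom B (Fo (src A f)) (Fo (tgt A f))) \<and>
     (\<forall>a \<in> obj A. Fm (ide A a) = ide B (Fo a)) \<and>
     (\<forall>f \<in> mor A. \<forall>g \<in> mor A. tgt A f = src A g \<longrightarrow> Fm (cmp A g f) = cmp B (Fm g) (Fm f)) \<and>
     (\<forall>f \<in> fwd A. Fm f \<in> fwd B) \<and> (\<forall>f \<in> bwd A. Fm f \<in> bwd B)"

text \<open>Car X U is the set X[U]; Act X f maps X[V] to X[U] for f : U -> V.
  Elements are pairs (U, x) with x in X[U].\<close>

record ('o, 'm, 'e) automaton =
  Car :: "'o \<Rightarrow> 'e set"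
  Act :: "'m \<Rightarrow> 'e \<Rightarrow> 'e"
  Start :: "('o \<times> 'e) set"
  Accept :: "('o \<times> 'e) set"

definition elements :: "('o, 'm) dcat \<Rightarrow> ('o, 'm, 'e) automaton \<Rightarrow> ('o \<times> 'e) set" where
  "elements C X = {(U, x). U \<in> obj C \<and> x \<in> Car X U}"

definition presheaf :: "('o, 'm) dcat \<Rightarrow> ('o, 'm, 'e) automaton \<Rightarrow> bool" where
  "presheaf C X \<longleftrightarrow>
     (\<forall>f \<in> mor C. \<forall>x \<in> Car X (tgt C f). Act X f x \<in> Car X (src C f)) \<and>
     (\<forall>a \<in> obj C. \<forall>x \<in> Car X a. Act X (ide C a) x = x) \<and>
     (\<forall>f \<in> mor C. \<forall>g \<in> mor C. tgt C f = src C g \<longrightarrow>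
        (\<forall>x \<in> Car X (tgt C g). Act X (cmp C g f) x = Act X f (Act X g x)))"

definition automaton :: "('o, 'm) dcat \<Rightarrow> ('o, 'm, 'e) automaton \<Rightarrow> bool" where
  "automaton C X \<longleftrightarrow> presheaf C X \<and> Start X \<subseteq> elements C X \<and> Accept X \<subseteq> elements C X"

definition aut_mor :: "('o, 'm) dcat \<Rightarrow> ('o, 'm, 'e) automaton \<Rightarrow> ('o, 'm, 'f) automaton
    \<Rightarrow> ('o \<Rightarrow> 'e \<Rightarrow> 'f) \<Rightarrow> bool" where
  "aut_mor C X Y \<eta> \<longleftrightarrow>
     (\<forall>U \<in> obj C. \<forall>x \<in> Car X U. \<eta> U x \<in> Car Y U) \<and>
     (\<forall>f \<in> mor C. \<forall>x \<in> Car X (tgt C f).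
        \<eta> (src C f) (Act X f x) = Act Y f (\<eta> (tgt C f) x)) \<and>
     (\<forall>(U, x) \<in> Start X. (U, \<eta> U x) \<in> Start Y) \<and>
     (\<forall>(U, x) \<in> Accept X. (U, \<eta> U x) \<in> Accept Y)"

definition aut_iso :: "('o, 'm) dcat \<Rightarrow> ('o, 'm, 'e) automaton \<Rightarrow> ('o, 'm, 'f) automaton \<Rightarrow> bool" where
  "aut_iso C X Y \<longleftrightarrow> (\<exists>\<eta> \<theta>. aut_mor C X Y \<eta> \<and> aut_mor C Y X \<theta> \<and>
     (\<forall>U \<in> obj C. \<forall>x \<in> Car X U. \<theta> U (\<eta> U x) = x) \<and>
     (\<forall>U \<in> obj C. \<forall>y \<in> Car Y U. \<eta> U (\<theta> U y) = y))"

datatype letter = S | T | I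

text \<open>The concatenation of the word w of copies of S, T, I (glueing top to bottom).
  Its objects are 0, ..., length w (bottom = 0, top = length w); it is thin, with a
  (unique) morphism (i,j) from i to j iff reach w i j.  The k-th letter relates k and k+1:
  S gives a formorphism k -> k+1, T a backmorphism k+1 -> k, I an inverse pair
  (formorphism k -> k+1, backmorphism k+1 -> k).\<close>

definition reach :: "letter list \<Rightarrow> nat \<Rightarrow> nat \<Rightarrow> bool" where
  "reach w i j \<longleftrightarrow>
     (i \<le> j \<and> (\<forall>k. i \<le> k \<and> k < j \<longrightarrow> w ! k \<in> {S, I})) \<or>
     (j \<le> i \<and> (\<forall>k. j \<le> k \<and> k < i \<longrightarrow> w ! k \<in> {T, I}))"

definition lin :: "letter list \<Rightarrow> (nat, nat \<times> nat) dcat" where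
  "lin w = \<lparr> obj = {0..length w},
             mor = {(i, j). i \<le> length w \<and> j \<le> length w \<and> reach w i j},
             src = fst, tgt = snd,
             cmp = (\<lambda>g f. (fst f, snd g)),
             ide = (\<lambda>i. (i, i)),
             fwd = {(i, j). i \<le> length w \<and> j \<le> length w \<and> reach w i j \<and> i \<le> j},
             bwd = {(i, j). i \<le> length w \<and> j \<le> length w \<and> reach w i j \<and> j \<le> i} \<rparr>"

definition path :: "('o, 'm) dcat \<Rightarrow> letter list \<Rightarrow> (nat \<Rightarrow> 'o) \<Rightarrow> (nat \<times> nat \<Rightarrow> 'm) \<Rightarrow> bool" where
  "path C w Fo Fm \<longleftrightarrow> dfunctor (lin w) C Fo Fm"

text \<open>The colimit of the representables C(-, omega(i)), computed pointwise:
  at U it is the set of pairs (i, f) with f : U -> omega(i), modulo the equivalence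
  relation generated by (i, f) ~ (j, omega(i,j) o f).\<close>

definition track_gen :: "('o, 'm) dcat \<Rightarrow> letter list \<Rightarrow> (nat \<Rightarrow> 'o) \<Rightarrow> (nat \<times> nat \<Rightarrow> 'm)
    \<Rightarrow> ((nat \<times> 'm) \<times> (nat \<times> 'm)) set" where
  "track_gen C w Fo Fm = {((i, f), (j, g)). f \<in> mor C \<and> tgt C f = Fo i \<and>
       (i, j) \<in> mor (lin w) \<and> g = cmp C (Fm (i, j)) f}"

definition track_rel :: "('o, 'm) dcat \<Rightarrow> letter list \<Rightarrow> (nat \<Rightarrow> 'o) \<Rightarrow> (nat \<times> nat \<Rightarrow> 'm)
    \<Rightarrow> ((nat \<times> 'm) \<times> (nat \<times> 'm)) set" where
  "track_rel C w Fo Fm = (track_gen C w Fo Fm \<union> (track_gen C w Fo Fm)\<inverse>)\<^sup>*"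

definition track_of :: "('o, 'm) dcat \<Rightarrow> letter list \<Rightarrow> (nat \<Rightarrow> 'o) \<Rightarrow> (nat \<times> nat \<Rightarrow> 'm)
    \<Rightarrow> ('o, 'm, (nat \<times> 'm) set) automaton" where
  "track_of C w Fo Fm =
     (let R = track_rel C w Fo Fm; n = length w in
      \<lparr> Car = (\<lambda>U. if U \<in> obj C
                     then {(i, f). i \<le> n \<and> f \<in> hom C U (Fo i)} // R else {}),
        Act = (\<lambda>g e. R `` ((\<lambda>(i, f). (i, cmp C f g)) ` e)),
        Start = {(Fo 0, R `` {(0, ide C (Fo 0))})},
        Accept = {(Fo n, R `` {(n, ide C (Fo n))})} \<rparr>)"

definition is_track :: "('o, 'm) dcat \<Rightarrow> ('o, 'm, 'e) automaton \<Rightarrow> bool" where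
  "is_track C X \<longleftrightarrow> automaton C X \<and>
     (\<exists>w Fo Fm. path C w Fo Fm \<and> aut_iso C X (track_of C w Fo Fm))"

definition sqsub :: "('o, 'm) dcat \<Rightarrow> ('o, 'm, 'e) automaton \<Rightarrow> ('o, 'm, 'f) automaton \<Rightarrow> bool" where
  "sqsub C D G \<longleftrightarrow> (\<exists>\<eta>. aut_mor C D G \<eta>)"

definition is_language :: "('o, 'm) dcat \<Rightarrow> ('o, 'm, 'e) automaton set \<Rightarrow> bool" where
  "is_language C L \<longleftrightarrow> (\<forall>G \<in> L. is_track C G) \<and>
     (\<forall>G \<in> L. \<forall>D. is_track C D \<and> sqsub C D G \<longrightarrow> D \<in> L)"

definition Lang :: "('o, 'm) dcat \<Rightarrow> ('o, 'm, 'x) automaton \<Rightarrow> ('o, 'm, 'e) automaton set" where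
  "Lang C X = {G. is_track C G \<and> (\<exists>\<eta>. aut_mor C G X \<eta>)}"

end

theory Submission
  imports Defs
begin

text \<open>An automaton X is the coproduct of its connected components, and a track object is
  connected: every element is reached from the class of the identity at some vertex of the
  path, and the classes at adjacent vertices are related by the action of the image of the
  edge between them.  Hence a morphism from a track object into the disjoint union of all
  members of a language L factors through a single member, so this disjoint union accepts
  exactly L.  Conversely Lang X is down-closed because automaton morphisms compose.\<close>

lemma category_src_obj: "category C \<Longrightarrow> f \<in> mor C \<Longrightarrow> src C f \<in> obj C"
  and category_tgt_obj: "category C \<Longrightarrow> f \<in> mor C \<Longrightarrow> tgt C f \<in> obj C"
  by (auto simp: category_def)

lemma category_ide_hom: "category C \<Longrightarrow> a \<in> obj C \<Longrightarrow> ide C a \<in> hom C a a"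
  by (auto simp: category_def)

lemma category_cmp_hom:
  "category C \<Longrightarrow> f \<in> hom C a b \<Longrightarrow> g \<in> hom C b c \<Longrightarrow> cmp C g f \<in> hom C a c"
  by (auto simp: category_def hom_def)

lemma category_cmp_ide_right: "category C \<Longrightarrow> f \<in> hom C a b \<Longrightarrow> cmp C f (ide C a) = f"
  and category_cmp_ide_left: "category C \<Longrightarrow> f \<in> hom C a b \<Longrightarrow> cmp C (ide C b) f = f"
  by (auto simp: category_def hom_def)

lemma category_cmp_assoc:
  "category C \<Longrightarrow> f \<in> hom C a b \<Longrightarrow> g \<in> hom C b c \<Longrightarrow> h \<in> hom C c d \<Longrightarrow>
     cmp C h (cmp C g f) = cmp C (cmp C h g) f"
  by (auto simp: category_def hom_def)

lemma path_Fo: "path C w Fo Fm \<Longrightarrow> i \<le> length w \<Longrightarrow> Fo i \<in> obj C"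
  by (auto simp: path_def dfunctor_def lin_def)

lemma path_Fm: "path C w Fo Fm \<Longrightarrow> (i, j) \<in> mor (lin w) \<Longrightarrow> Fm (i, j) \<in> hom C (Fo i) (Fo j)"
  by (auto simp: path_def dfunctor_def lin_def)

lemma mor_lin_iff: "(i, j) \<in> mor (lin w) \<longleftrightarrow> i \<le> length w \<and> j \<le> length w \<and> reach w i j"
  by (simp add: lin_def)

lemma mor_lin_adjacent:
  assumes "i < length w"
  shows "(i, Suc i) \<in> mor (lin w) \<or> (Suc i, i) \<in> mor (lin w)"
  using assms by (cases "w ! i") (auto simp: mor_lin_iff reach_def le_less_Suc_eq)

lemma aut_mor_comp:
  assumes C: "category C" and \<eta>: "aut_mor C D G \<eta>" and \<theta>: "aut_mor C G X \<theta>"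
  shows "aut_mor C D X (\<lambda>U x. \<theta> U (\<eta> U x))"
  unfolding aut_mor_def
proof (intro conjI ballI)
  fix f x assume f: "f \<in> mor C" and x: "x \<in> Car D (tgt C f)"
  have "\<eta> (tgt C f) x \<in> Car G (tgt C f)"
    using \<eta> x category_tgt_obj[OF C f] by (auto simp: aut_mor_def)
  then show "\<theta> (src C f) (\<eta> (src C f) (Act D f x)) = Act X f (\<theta> (tgt C f) (\<eta> (tgt C f) x))"
    using \<eta> \<theta> f x by (simp add: aut_mor_def)
qed (use \<eta> \<theta> in \<open>fastforce simp: aut_mor_def\<close>)+

definition act_invariant :: "('o, 'm) dcat \<Rightarrow> ('o, 'm, 'e) automaton \<Rightarrow> ('o \<Rightarrow> 'e \<Rightarrow> 'k) \<Rightarrow> bool"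
  where "act_invariant C X \<kappa> \<longleftrightarrow>
     (\<forall>f \<in> mor C. \<forall>x \<in> Car X (tgt C f). \<kappa> (src C f) (Act X f x) = \<kappa> (tgt C f) x)"

lemma act_invariant_aut_mor:
  assumes C: "category C" and \<theta>: "aut_mor C X Y \<theta>" and \<kappa>: "act_invariant C Y \<kappa>"
  shows "act_invariant C X (\<lambda>U x. \<kappa> U (\<theta> U x))"
  unfolding act_invariant_def
proof (intro ballI)
  fix f x assume f: "f \<in> mor C" and x: "x \<in> Car X (tgt C f)"
  have "\<theta> (tgt C f) x \<in> Car Y (tgt C f)"
    using \<theta> x category_tgt_obj[OF C f] by (auto simp: aut_mor_def)
  then show "\<kappa> (src C f) (\<theta> (src C f) (Act X f x)) = \<kappa> (tgt C f) (\<theta> (tgt C f) x)"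
    using \<theta> \<kappa> f x by (simp add: aut_mor_def act_invariant_def)
qed

section \<open>Track objects are connected\<close>

definition track_dom :: "('o, 'm) dcat \<Rightarrow> letter list \<Rightarrow> (nat \<Rightarrow> 'o) \<Rightarrow> 'o \<Rightarrow> (nat \<times> 'm) set"
  where "track_dom C w Fo U = {(i, f). i \<le> length w \<and> f \<in> hom C U (Fo i)}"

definition track_precomp :: "('o, 'm) dcat \<Rightarrow> 'm \<Rightarrow> nat \<times> 'm \<Rightarrow> nat \<times> 'm"
  where "track_precomp C g = (\<lambda>(i, f). (i, cmp C f g))"

lemma Car_track_of:
  "U \<in> obj C \<Longrightarrow> Car (track_of C w Fo Fm) U = track_dom C w Fo U // track_rel C w Fo Fm"
  by (simp add: track_of_def track_dom_def Let_def)

lemma Act_track_of: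
  "Act (track_of C w Fo Fm) g e = track_rel C w Fo Fm `` (track_precomp C g ` e)"
  by (simp add: track_of_def track_precomp_def Let_def)

lemma equiv_track_rel: "equiv UNIV (track_rel C w Fo Fm)"
  unfolding track_rel_def
  by (rule equivI) (auto simp: refl_rtrancl sym_rtrancl[OF sym_Un_converse] trans_rtrancl)

locale path_in_category =
  fixes C :: "('o, 'm) dcat" and w :: "letter list"
    and Fo :: "nat \<Rightarrow> 'o" and Fm :: "nat \<times> nat \<Rightarrow> 'm"
  assumes category: "category C" and path: "path C w Fo Fm"
begin

abbreviation "R \<equiv> track_rel C w Fo Fm"
abbreviation "Tr \<equiv> track_of C w Fo Fm"
abbreviation base :: "nat \<Rightarrow> (nat \<times> 'm) set" where "base i \<equiv> R `` {(i, ide C (Fo i))}"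

lemma track_gen_dom:
  assumes "(a, b) \<in> track_gen C w Fo Fm"
  shows "a \<in> track_dom C w Fo U \<longleftrightarrow> b \<in> track_dom C w Fo U"
proof -
  obtain i f j where a: "a = (i, f)" and b: "b = (j, cmp C (Fm (i, j)) f)"
    and f: "f \<in> mor C" "tgt C f = Fo i" and ij: "(i, j) \<in> mor (lin w)"
    using assms by (auto simp: track_gen_def)
  have "cmp C (Fm (i, j)) f \<in> hom C (src C f) (Fo j)"
    using category_cmp_hom[OF category _ path_Fm[OF path ij]] f by (simp add: hom_def)
  then show ?thesis
    using f ij by (auto simp: a b track_dom_def hom_def mor_lin_iff)
qed

lemma track_rel_dom:
  assumes "(a, b) \<in> R" and "a \<in> track_dom C w Fo U"
  shows "b \<in> track_dom C w Fo U"
  using assms unfolding track_rel_def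
  by (induction rule: rtrancl_induct) (auto dest: track_gen_dom)

lemma track_gen_precomp:
  assumes ab: "(a, b) \<in> track_gen C w Fo Fm"
    and a: "a \<in> track_dom C w Fo (tgt C g)" and g: "g \<in> mor C"
  shows "(track_precomp C g a, track_precomp C g b) \<in> track_gen C w Fo Fm"
proof -
  obtain i f j where a_eq: "a = (i, f)" and b: "b = (j, cmp C (Fm (i, j)) f)"
    and ij: "(i, j) \<in> mor (lin w)"
    using ab by (auto simp: track_gen_def)
  have f: "f \<in> hom C (tgt C g) (Fo i)" using a by (simp add: a_eq track_dom_def)
  have g': "g \<in> hom C (src C g) (tgt C g)" using g by (simp add: hom_def)
  have "cmp C (cmp C (Fm (i, j)) f) g = cmp C (Fm (i, j)) (cmp C f g)"
    using category_cmp_assoc[OF category g' f path_Fm[OF path ij]] by simp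
  moreover have "cmp C f g \<in> hom C (src C g) (Fo i)"
    using category_cmp_hom[OF category g' f] .
  ultimately show ?thesis
    using ij by (auto simp: a_eq b track_precomp_def track_gen_def hom_def)
qed

lemma track_rel_precomp:
  assumes "(a, b) \<in> R" and "a \<in> track_dom C w Fo (tgt C g)" and g: "g \<in> mor C"
  shows "(track_precomp C g a, track_precomp C g b) \<in> R"
  using assms(1,2) unfolding track_rel_def
proof (induction rule: rtrancl_induct)
  case (step b c)
  have b: "b \<in> track_dom C w Fo (tgt C g)"
    using track_rel_dom step.hyps(1) step.prems unfolding track_rel_def by blast
  have "(track_precomp C g b, track_precomp C g c) \<in>
      track_gen C w Fo Fm \<union> (track_gen C w Fo Fm)\<inverse>"
    using step.hyps(2)
  proof
    assume "(b, c) \<in> track_gen C w Fo Fm"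
    then show ?thesis using track_gen_precomp b g by blast
  next
    assume "(b, c) \<in> (track_gen C w Fo Fm)\<inverse>"
    then have cb: "(c, b) \<in> track_gen C w Fo Fm" by simp
    moreover have "c \<in> track_dom C w Fo (tgt C g)" using track_gen_dom[OF cb] b by blast
    ultimately show ?thesis using track_gen_precomp g by blast
  qed
  then show ?case using step.IH step.prems by (meson rtrancl.rtrancl_into_rtrancl)
qed simp

lemma Act_track_class:
  assumes a: "a \<in> track_dom C w Fo (tgt C g)" and g: "g \<in> mor C"
  shows "Act Tr g (R `` {a}) = R `` {track_precomp C g a}"
proof
  show "Act Tr g (R `` {a}) \<subseteq> R `` {track_precomp C g a}"
  proof
    fix x assume "x \<in> Act Tr g (R `` {a})"
    then obtain b where "(a, b) \<in> R" and "(track_precomp C g b, x) \<in> R"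
      by (auto simp: Act_track_of)
    then show "x \<in> R `` {track_precomp C g a}"
      using track_rel_precomp[OF _ a g] unfolding track_rel_def by (blast intro: rtrancl_trans)
  qed
  have "track_precomp C g a \<in> track_precomp C g ` (R `` {a})"
    by (simp add: track_rel_def)
  then show "R `` {track_precomp C g a} \<subseteq> Act Tr g (R `` {a})"
    by (auto simp: Act_track_of)
qed

lemma Act_base:
  assumes i: "i \<le> length w" and f: "f \<in> hom C U (Fo i)"
  shows "Act Tr f (base i) = R `` {(i, f)}"
proof -
  have "ide C (Fo i) \<in> hom C (Fo i) (Fo i)"
    using category_ide_hom[OF category path_Fo[OF path i]] .
  then have "(i, ide C (Fo i)) \<in> track_dom C w Fo (tgt C f)"
    using i f by (simp add: track_dom_def hom_def)
  moreover have "track_precomp C f (i, ide C (Fo i)) = (i, f)"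
    using category_cmp_ide_left[OF category f] by (simp add: track_precomp_def)
  ultimately show ?thesis using Act_track_class f by (simp add: hom_def)
qed

lemma base_in_Car: "i \<le> length w \<Longrightarrow> base i \<in> Car Tr (Fo i)"
  using category_ide_hom[OF category path_Fo[OF path]] path_Fo[OF path]
  by (auto simp: Car_track_of track_dom_def intro: quotientI)

lemma base_eq_Act_edge:
  assumes ij: "(i, j) \<in> mor (lin w)"
  shows "base i = Act Tr (Fm (i, j)) (base j)"
proof -
  have i: "i \<le> length w" and j: "j \<le> length w" using ij by (auto simp: mor_lin_iff)
  have m: "Fm (i, j) \<in> hom C (Fo i) (Fo j)" using path_Fm[OF path ij] .
  have "((i, ide C (Fo i)), (j, Fm (i, j))) \<in> track_gen C w Fo Fm"
    using category_ide_hom[OF category path_Fo[OF path i]] category_cmp_ide_right[OF category m] ij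
    by (simp add: track_gen_def hom_def)
  then have "base i = R `` {(j, Fm (i, j))}"
    using equiv_class_eq_iff[OF equiv_track_rel] unfolding track_rel_def by blast
  also have "\<dots> = Act Tr (Fm (i, j)) (base j)" using Act_base[OF j m] by simp
  finally show ?thesis .
qed

lemma Car_track_of_generated:
  assumes "U \<in> obj C" and "x \<in> Car Tr U"
  obtains i f where "i \<le> length w" and "f \<in> hom C U (Fo i)" and "x = Act Tr f (base i)"
proof -
  obtain a where x: "x = R `` {a}" and a: "a \<in> track_dom C w Fo U"
    using assms by (auto simp: Car_track_of elim: quotientE)
  then obtain i f where "a = (i, f)" "i \<le> length w" "f \<in> hom C U (Fo i)"
    by (auto simp: track_dom_def)
  then show ?thesis using that x Act_base by simp
qed

lemma act_invariant_const:
  assumes \<kappa>: "act_invariant C Tr \<kappa>" and U: "U \<in> obj C" and x: "x \<in> Car Tr U"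
  shows "\<kappa> U x = \<kappa> (Fo 0) (base 0)"
proof -
  have invariant: "\<kappa> U' (Act Tr f y) = \<kappa> V y"
    if "f \<in> hom C U' V" and "y \<in> Car Tr V" for f U' V y
    using \<kappa> that by (auto simp: act_invariant_def hom_def)
  have edge: "\<kappa> (Fo i) (base i) = \<kappa> (Fo j) (base j)" if "(i, j) \<in> mor (lin w)" for i j
    using invariant[OF path_Fm[OF path that] base_in_Car] base_eq_Act_edge[OF that] that
    by (simp add: mor_lin_iff)
  have base_const: "\<kappa> (Fo i) (base i) = \<kappa> (Fo 0) (base 0)" if "i \<le> length w" for i
    using that
  proof (induction i)
    case (Suc i)
    then have "\<kappa> (Fo (Suc i)) (base (Suc i)) = \<kappa> (Fo i) (base i)"
      using mor_lin_adjacent[of i w] edge by (metis Suc_le_eq)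
    then show ?case using Suc by simp
  qed simp
  obtain i f where i: "i \<le> length w" and f: "f \<in> hom C U (Fo i)" and "x = Act Tr f (base i)"
    using Car_track_of_generated[OF U x] .
  then have "\<kappa> U x = \<kappa> (Fo i) (base i)" using invariant[OF f base_in_Car[OF i]] by simp
  then show ?thesis using base_const[OF i] by simp
qed

end

lemma is_track_act_invariant_const:
  assumes C: "category C" and G: "is_track C G" and \<kappa>: "act_invariant C G \<kappa>"
  obtains k where "\<forall>U \<in> obj C. \<forall>x \<in> Car G U. \<kappa> U x = k"
proof -
  obtain w Fo Fm \<eta> \<theta> where p: "path C w Fo Fm"
    and \<eta>: "aut_mor C G (track_of C w Fo Fm) \<eta>" and \<theta>: "aut_mor C (track_of C w Fo Fm) G \<theta>"
    and \<theta>\<eta>: "\<forall>U \<in> obj C. \<forall>x \<in> Car G U. \<theta> U (\<eta> U x) = x"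
    using G by (auto simp: is_track_def aut_iso_def)
  interpret path_in_category C w Fo Fm using C p by unfold_locales
  have "act_invariant C Tr (\<lambda>U y. \<kappa> U (\<theta> U y))"
    using act_invariant_aut_mor[OF C \<theta> \<kappa>] .
  note invariant = act_invariant_const[OF this]
  have "\<kappa> U x = \<kappa> (Fo 0) (\<theta> (Fo 0) (base 0))" if U: "U \<in> obj C" and x: "x \<in> Car G U" for U x
  proof -
    have "\<eta> U x \<in> Car Tr U" using \<eta> U x by (auto simp: aut_mor_def)
    moreover have "\<theta> U (\<eta> U x) = x" using \<theta>\<eta> U x by blast
    ultimately show ?thesis using invariant[OF U] by metis
  qed
  then show ?thesis using that by blast
qed

lemma is_track_Start_nonempty:
  assumes "is_track C G"
  shows "Start G \<noteq> {}"
proof -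
  obtain w Fo Fm \<theta> where "aut_mor C (track_of C w Fo Fm) G \<theta>"
    using assms by (auto simp: is_track_def aut_iso_def)
  moreover have "(Fo 0, track_rel C w Fo Fm `` {(0, ide C (Fo 0))}) \<in> Start (track_of C w Fo Fm)"
    by (simp add: track_of_def Let_def)
  ultimately show ?thesis unfolding aut_mor_def by blast
qed

section \<open>The disjoint union of a language\<close>

definition coprod :: "('o, 'm) dcat \<Rightarrow> ('o, 'm, 'e) automaton set
    \<Rightarrow> ('o, 'm, ('o, 'm, 'e) automaton \<times> 'e) automaton"
  where "coprod C L =
    \<lparr> Car = (\<lambda>U. if U \<in> obj C then {(G, x). G \<in> L \<and> x \<in> Car G U} else {}),
      Act = (\<lambda>f (G, x). (G, Act G f x)),
      Start = {(U, (G, x)). G \<in> L \<and> (U, x) \<in> Start G},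
      Accept = {(U, (G, x)). G \<in> L \<and> (U, x) \<in> Accept G} \<rparr>"

lemma automaton_coprod:
  assumes C: "category C" and L: "\<forall>G \<in> L. automaton C G"
  shows "automaton C (coprod C L)"
proof -
  have "presheaf C G" and "Start G \<subseteq> elements C G" and "Accept G \<subseteq> elements C G"
    if "G \<in> L" for G
    using L that by (auto simp: automaton_def)
  then show ?thesis
    using category_src_obj[OF C] category_tgt_obj[OF C]
    unfolding automaton_def presheaf_def elements_def coprod_def
    by (fastforce split: prod.splits)
qed

lemma aut_mor_coprod_in: "G \<in> L \<Longrightarrow> aut_mor C G (coprod C L) (\<lambda>U x. (G, x))"
  by (auto simp: aut_mor_def coprod_def)

lemma aut_mor_coprod_component:
  assumes C: "category C" and D: "automaton C D" and \<eta>: "aut_mor C D (coprod C L) \<eta>"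
    and G: "\<forall>U \<in> obj C. \<forall>x \<in> Car D U. fst (\<eta> U x) = G"
  shows "aut_mor C D G (\<lambda>U x. snd (\<eta> U x))"
proof -
  have \<eta>_G: "\<eta> U x = (G, snd (\<eta> U x))" if "U \<in> obj C" "x \<in> Car D U" for U x
    using G that by (metis prod.collapse)
  have elements: "U \<in> obj C \<and> x \<in> Car D U" if "(U, x) \<in> Start D \<or> (U, x) \<in> Accept D" for U x
    using D that by (auto simp: automaton_def elements_def)
  show ?thesis
    unfolding aut_mor_def
  proof (intro conjI ballI)
    fix U x assume U: "U \<in> obj C" and x: "x \<in> Car D U"
    have "\<eta> U x \<in> Car (coprod C L) U" using \<eta> U x by (simp add: aut_mor_def)
    then show "snd (\<eta> U x) \<in> Car G U"
      using U \<eta>_G[OF U x] by (auto simp: coprod_def)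
  next
    fix f x assume f: "f \<in> mor C" and x: "x \<in> Car D (tgt C f)"
    have "\<eta> (src C f) (Act D f x) = Act (coprod C L) f (\<eta> (tgt C f) x)"
      using \<eta> f x by (simp add: aut_mor_def)
    then show "snd (\<eta> (src C f) (Act D f x)) = Act G f (snd (\<eta> (tgt C f) x))"
      using \<eta>_G[OF category_tgt_obj[OF C f] x] by (simp add: coprod_def split: prod.splits)
  next
    fix p assume p: "p \<in> Start D"
    obtain U x where Ux: "p = (U, x)" by fastforce
    have "(U, \<eta> U x) \<in> Start (coprod C L)" using \<eta> p Ux by (auto simp: aut_mor_def)
    moreover have "\<eta> U x = (G, snd (\<eta> U x))" using \<eta>_G elements p Ux by blast
    ultimately have "(U, (G, snd (\<eta> U x))) \<in> Start (coprod C L)" by metis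
    then show "case p of (U, x) \<Rightarrow> (U, snd (\<eta> U x)) \<in> Start G"
      by (simp add: Ux coprod_def)
  next
    fix p assume p: "p \<in> Accept D"
    obtain U x where Ux: "p = (U, x)" by fastforce
    have "(U, \<eta> U x) \<in> Accept (coprod C L)" using \<eta> p Ux by (auto simp: aut_mor_def)
    moreover have "\<eta> U x = (G, snd (\<eta> U x))" using \<eta>_G elements p Ux by blast
    ultimately have "(U, (G, snd (\<eta> U x))) \<in> Accept (coprod C L)" by metis
    then show "case p of (U, x) \<Rightarrow> (U, snd (\<eta> U x)) \<in> Accept G"
      by (simp add: Ux coprod_def)
  qed
qed

lemma aut_mor_track_coprod_factors:
  assumes C: "category C" and D: "is_track C D" and \<eta>: "aut_mor C D (coprod C L) \<eta>"
  obtains G where "G \<in> L" and "aut_mor C D G (\<lambda>U x. snd (\<eta> U x))"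
proof -
  have "act_invariant C D (\<lambda>U x. fst (\<eta> U x))"
    using \<eta> category_tgt_obj[OF C]
    by (auto simp: act_invariant_def aut_mor_def coprod_def split: prod.splits)
  then obtain G where G: "\<forall>U \<in> obj C. \<forall>x \<in> Car D U. fst (\<eta> U x) = G"
    using is_track_act_invariant_const[OF C D] by blast
  have Da: "automaton C D" using D by (simp add: is_track_def)
  obtain U x where s: "(U, x) \<in> Start D" using is_track_Start_nonempty[OF D] by auto
  then have "(U, \<eta> U x) \<in> Start (coprod C L)" using \<eta> by (auto simp: aut_mor_def)
  moreover have "fst (\<eta> U x) = G" using G s Da by (auto simp: automaton_def elements_def)
  ultimately have "G \<in> L" by (auto simp: coprod_def)
  then show ?thesis using that aut_mor_coprod_component[OF C Da \<eta> G] by blast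
qed

lemma is_language_Lang:
  assumes C: "category C"
  shows "is_language C (Lang C X)"
  unfolding is_language_def
proof (intro conjI ballI allI impI)
  fix G assume "G \<in> Lang C X"
  then show "is_track C G" by (simp add: Lang_def)
next
  fix G D assume G: "G \<in> Lang C X" and D: "is_track C D \<and> sqsub C D G"
  then obtain \<eta> \<theta> where "aut_mor C D G \<eta>" and "aut_mor C G X \<theta>"
    unfolding Lang_def sqsub_def by blast
  then have "aut_mor C D X (\<lambda>U x. \<theta> U (\<eta> U x))" by (rule aut_mor_comp[OF C])
  then show "D \<in> Lang C X" using D unfolding Lang_def by blast
qed

lemma Lang_coprod:
  fixes L :: "('o, 'm, 'e) automaton set"
  assumes C: "category C" and L: "is_language C L"
  shows "Lang C (coprod C L) = L"
proof
  show "Lang C (coprod C L) \<subseteq> L"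
  proof
    fix D :: "('o, 'm, 'e) automaton" assume "D \<in> Lang C (coprod C L)"
    then obtain \<eta> where D: "is_track C D" and \<eta>: "aut_mor C D (coprod C L) \<eta>"
      unfolding Lang_def by blast
    obtain G where G: "G \<in> L" and "aut_mor C D G (\<lambda>U x. snd (\<eta> U x))"
      using aut_mor_track_coprod_factors[OF C D \<eta>] .
    then have "sqsub C D G" unfolding sqsub_def by blast
    then show "D \<in> L" using L D G unfolding is_language_def by blast
  qed
  show "L \<subseteq> Lang C (coprod C L)"
  proof
    fix G assume G: "G \<in> L"
    then have "is_track C G" using L by (simp add: is_language_def)
    then show "G \<in> Lang C (coprod C L)" using aut_mor_coprod_in[OF G] unfolding Lang_def by blast
  qed
qed

theorem lemma9:
  fixes C :: "('o, 'm) dcat"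
  assumes "dcategory C"
  shows "(\<forall>L :: ('o, 'm, 'e) automaton set. is_language C L \<longrightarrow>
            (\<exists>X :: ('o, 'm, ('o, 'm, 'e) automaton \<times> 'e) automaton.
               automaton C X \<and> Lang C X = L))
       \<and> (\<forall>X :: ('o, 'm, 'x) automaton. automaton C X \<longrightarrow>
            is_language C (Lang C X :: ('o, 'm, 'e) automaton set))"
proof -
  have C: "category C" using assms by (simp add: dcategory_def)
  have "automaton C (coprod C L) \<and> Lang C (coprod C L) = L"
    if "is_language C L" for L :: "('o, 'm, 'e) automaton set"
  proof
    have "\<forall>G \<in> L. automaton C G" using that by (simp add: is_language_def is_track_def)
    then show "automaton C (coprod C L)" by (rule automaton_coprod[OF C])
  qed (rule Lang_coprod[OF C that])
  then show ?thesis using is_language_Lang[OF C] by blast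
qed

end
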